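(* Let $X^{(\kappa)}_N$ be a twisted affine type with dual Coxeter number $h^\vee$. In the abelian group $\mathcal{T}_0(X^{(\kappa)}_N)$ the following hold for all $a\in I_\sigma$, $u\in\mathbb{C}_{\kappa_a\hbar}$: (1) $T^{(a)}(u+h^\vee)=T^{(a)}(u)^{-1}$ if $X^{(\kappa)}_N=D^{(2)}_{r+1}$ with $r+1$ even or $X^{(\kappa)}_N=D^{(3)}_4$, and $T^{(a)}(u+h^\vee)=T^{(a)}(u+\Omega)^{-1}$ otherwise; (2) $T^{(a)}(u+2h^\vee)=T^{(a)}(u)$.
   Context: Fix $\hbar\in\mathbb{C}\setminus2\pi\sqrt{-1}\mathbb{Q}$; $\mathbb{C}_c:=\mathbb{C}/(2\pi\sqrt{-1}/c)\mathbb{Z}$. Types: $A^{(2)}_{2r-1}$ ($r\ge2$, $h^\vee=2r$), $A^{(2)}_{2r}$ ($r\ge1$, $h^\vee=2r+1$), $D^{(2)}_{r+1}$ ($r\ge3$, $h^\vee=2r$), $E^{(2)}_6$ ($h^\vee=12$), $D^{(3)}_4$ ($h^\vee=6$); $\kappa=3$ for $D^{(3)}_4$, else 2; $I_\sigma=\{1,\dots,r\}$ in the first three cases, $\{1,2,3,4\}$ for $E^{(2)}_6$, $\{1,2\}$ for $D^{(3)}_4$. $\kappa_a$: $A^{(2)}_{2r-1}$: $\kappa_a=1$ ($a<r$), $\kappa_r=2$; $A^{(2)}_{2r}$: all 1; $D^{(2)}_{r+1}$: $\kappa_a=2$ ($a<r$), $\kappa_r=1$; $E^{(2)}_6$: $\kappa_1=\kappa_2=1$,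 $\kappa_3=\kappa_4=2$; $D^{(3)}_4$: $\kappa_1=1$, $\kappa_2=3$. $\Omega=2\pi\sqrt{-1}/(\kappa\hbar)$. $\mathcal{T}_0(X^{(\kappa)}_N)$ is the abelian group (written multiplicatively) generated by $T^{(a)}(u)$ ($a\in I_\sigma$, $u\in\mathbb{C}_{\kappa_a\hbar}$) with relations $T^{(a)}(u-1)T^{(a)}(u+1)=M^{(a)}(u)$, $T^{(0)}(u)=1$, where: $A^{(2)}_{2r-1}$: $M^{(a)}=T^{(a-1)}(u)T^{(a+1)}(u)$ ($a\le r-1$), $M^{(r)}=T^{(r-1)}(u)T^{(r-1)}(u+\Omega)$; $A^{(2)}_{2r}$: $M^{(a)}=T^{(a-1)}(u)T^{(a+1)}(u)$ ($a\le r-1$), $M^{(r)}=T^{(r-1)}(u)T^{(r)}(u+\Omega)$; $D^{(2)}_{r+1}$: $M^{(a)}=T^{(a-1)}(u)T^{(a+1)}(u)$ ($a\le r-2$), $M^{(r-1)}=T^{(r-2)}(u)T^{(r)}(u)T^{(r)}(u+\Omega)$, $M^{(r)}=T^{(r-1)}(u)$; $E^{(2)}_6$: $M^{(1)}=T^{(2)}(u)$, $M^{(2)}=T^{(1)}(u)T^{(3)}(u)$, $M^{(3)}=T^{(2)}(u)T^{(2)}(u+\Omega)T^{(4)}(u)$, $M^{(4)}=T^{(3)}(u)$; $D^{(3)}_4$: $M^{(1)}=T^{(2)}(u)$, $M^{(2)}=T^{(1)}(u)T^{(1)}(u-\Omega)T^{(1)}(u+\Omega)$. *)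

theory Defs
  imports Complex_Main
begin

text \<open>Twisted affine types. Parameters:
  A2odd r = A^{(2)}_{2r-1} (r \<ge> 2), A2even r = A^{(2)}_{2r} (r \<ge> 1),
  D2 r = D^{(2)}_{r+1} (r \<ge> 3), E26 = E^{(2)}_6, D34 = D^{(3)}_4.\<close>

datatype twisted_type = A2odd nat | A2even nat | D2 nat | E26 | D34

fun tt_wf :: "twisted_type \<Rightarrow> bool" where
  "tt_wf (A2odd r) = (r \<ge> 2)"
| "tt_wf (A2even r) = (r \<ge> 1)"
| "tt_wf (D2 r) = (r \<ge> 3)"
| "tt_wf E26 = True"
| "tt_wf D34 = True"

fun hvee :: "twisted_type \<Rightarrow> nat" where
  "hvee (A2odd r) = 2 * r"
| "hvee (A2even r) = 2 * r + 1"
| "hvee (D2 r) = 2 * r"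
| "hvee E26 = 12"
| "hvee D34 = 6"

fun tkappa :: "twisted_type \<Rightarrow> nat" where
  "tkappa D34 = 3"
| "tkappa _ = 2"

fun Isigma :: "twisted_type \<Rightarrow> nat set" where
  "Isigma (A2odd r) = {1..r}"
| "Isigma (A2even r) = {1..r}"
| "Isigma (D2 r) = {1..r}"
| "Isigma E26 = {1,2,3,4}"
| "Isigma D34 = {1,2}"

fun kappa_a :: "twisted_type \<Rightarrow> nat \<Rightarrow> nat" where
  "kappa_a (A2odd r) a = (if a < r then 1 else 2)"
| "kappa_a (A2even r) a = 1"
| "kappa_a (D2 r) a = (if a < r then 2 else 1)"
| "kappa_a E26 a = (if a \<le> 2 then 1 else 2)"
| "kappa_a D34 a = (if a = 1 then 1 else 3)"

definition Omega :: "twisted_type \<Rightarrow> complex \<Rightarrow> complex" where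
  "Omega X hb = 2 * pi * \<i> / (of_nat (tkappa X) * hb)"

text \<open>Right-hand side M^{(a)}(u) of the T-system, written additively
  (the abelian group is written additively: products become sums).\<close>
fun Mrhs :: "twisted_type \<Rightarrow> complex \<Rightarrow> (nat \<Rightarrow> complex \<Rightarrow> 'g::ab_group_add)
              \<Rightarrow> nat \<Rightarrow> complex \<Rightarrow> 'g" where
  "Mrhs (A2odd r) W T a u =
     (if a \<le> r - 1 then T (a - 1) u + T (a + 1) u else T (r - 1) u + T (r - 1) (u + W))"
| "Mrhs (A2even r) W T a u =
     (if a \<le> r - 1 then T (a - 1) u + T (a + 1) u else T (r - 1) u + T r (u + W))"
| "Mrhs (D2 r) W T a u =
     (if a \<le> r - 2 then T (a - 1) u + T (a + 1) u
      else if a = r - 1 then T (r - 2) u + T r u + T r (u + W)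
      else T (r - 1) u)"
| "Mrhs E26 W T a u =
     (if a = 1 then T 2 u
      else if a = 2 then T 1 u + T 3 u
      else if a = 3 then T 2 u + T 2 (u + W) + T 4 u
      else T 3 u)"
| "Mrhs D34 W T a u =
     (if a = 1 then T 2 u else T 1 u + T 1 (u - W) + T 1 (u + W))"

text \<open>T is a family of elements T^{(a)}(u) of an abelian group satisfying the
  defining relations of T_0(X): T^{(a)} is a function on C_{kappa_a hbar}
  (i.e. periodic with period 2 pi i/(kappa_a hbar)), T^{(0)} = identity, and
  the T-system relations hold.\<close>
definition is_T0_family :: "twisted_type \<Rightarrow> complex \<Rightarrow> (nat \<Rightarrow> complex \<Rightarrow> 'g::ab_group_add) \<Rightarrow> bool" where
  "is_T0_family X hb T \<longleftrightarrow>
     (\<forall>u. T 0 u = 0) \<and>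
     (\<forall>a\<in>Isigma X. \<forall>u. T a (u + 2 * pi * \<i> / (of_nat (kappa_a X a) * hb)) = T a u) \<and>
     (\<forall>a\<in>Isigma X. \<forall>u. T a (u - 1) + T a (u + 1) = Mrhs X (Omega X hb) T a u)"

end

theory Submission
  imports Defs
begin

text \<open>Along a chain of type A nodes with \<open>T 0 = 0\<close> (the group is written additively) the
  T-system determines every node from the first one: \<open>T a u\<close> is the sum of \<open>T 1\<close> over the points
  \<open>u - a + 1, u - a + 3, \<dots>, u + a - 1\<close>. For \<open>A2odd r\<close> and \<open>A2even r\<close> the system unfolds, through
  the diagram automorphism together with the shift by \<open>\<Omega>\<close>, into an ordinary type A system of rank
  \<open>h - 1\<close> (\<open>h\<close> the dual Coxeter number) vanishing at both ends; splitting the sum for the vanishing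
  node \<open>h\<close> gives \<open>T a (u + h) = - T (h - a) u\<close>, and folding back gives the half-period law. For
  \<open>D2 r\<close>, \<open>E26\<close> and \<open>D34\<close> the relation at the branching node becomes a linear recurrence for
  \<open>T 1\<close> alone which makes \<open>T 1\<close> antiperiodic; this passes to every node expressed through \<open>T 1\<close>,
  and the remaining node is handled by telescoping its own relation. The second law follows from
  the first because every node has period \<open>2\<Omega>\<close>.\<close>

definition progression_sum :: "('a::comm_ring_1 \<Rightarrow> 'g::ab_group_add) \<Rightarrow> 'a \<Rightarrow> nat \<Rightarrow> 'g" where
  "progression_sum f b k = (\<Sum>j<k. f (b + 2 * of_nat j))"

definition centred_sum :: "('a::comm_ring_1 \<Rightarrow> 'g::ab_group_add) \<Rightarrow> nat \<Rightarrow> 'a \<Rightarrow> 'g" where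
  "centred_sum f k u = progression_sum f (u - of_nat k + 1) k"

lemma progression_sum_0 [simp]: "progression_sum f b 0 = 0"
  by (simp add: progression_sum_def)

lemma progression_sum_Suc:
  "progression_sum f b (Suc k) = progression_sum f b k + f (b + 2 * of_nat k)"
  by (simp add: progression_sum_def)

lemma progression_sum_Suc_shift: "progression_sum f b (Suc k) = f b + progression_sum f (b + 2) k"
  unfolding progression_sum_def by (subst sum.lessThan_Suc_shift) (simp add: algebra_simps)

lemma progression_sum_add:
  "progression_sum f b (p + q) = progression_sum f b p + progression_sum f (b + 2 * of_nat p) q"
  by (induction q) (simp_all add: progression_sum_Suc algebra_simps)

lemma centred_sum_0 [simp]: "centred_sum f 0 u = 0"
  by (simp add: centred_sum_def)

lemma centred_sum_1 [simp]: "centred_sum f (Suc 0) u = f u"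
  by (simp add: centred_sum_def progression_sum_def)

lemma centred_sum_recurrence:
  "centred_sum f (Suc (Suc m)) u
     = centred_sum f (Suc m) (u - 1) + centred_sum f (Suc m) (u + 1) - centred_sum f m u"
proof -
  define b where "b = u - of_nat m + 1"
  have "centred_sum f (Suc (Suc m)) u = f (b - 2) + progression_sum f b (Suc m)"
    "centred_sum f (Suc m) (u - 1) = f (b - 2) + progression_sum f b m"
    "centred_sum f (Suc m) (u + 1) = progression_sum f b (Suc m)"
    "centred_sum f m u = progression_sum f b m"
    unfolding centred_sum_def b_def progression_sum_Suc_shift by (simp_all add: algebra_simps)
  then show ?thesis by (simp add: algebra_simps)
qed

lemma centred_sum_Suc_Suc:
  "centred_sum f (Suc (Suc m)) u = f (u - of_nat m - 1) + centred_sum f m u + f (u + of_nat m + 1)"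
  using progression_sum_Suc_shift[of f "u - of_nat m - 1" "Suc m"]
  unfolding centred_sum_def progression_sum_Suc by (simp add: algebra_simps)

lemma centred_sum_translate:
  "centred_sum f k (u + 1) + f (u - of_nat k) = centred_sum f k (u - 1) + f (u + of_nat k)"
  using progression_sum_Suc_shift[of f "u - of_nat k" k] progression_sum_Suc[of f "u - of_nat k" k]
  unfolding centred_sum_def by (simp add: algebra_simps)

lemma centred_sum_split:
  assumes "a \<le> n"
  shows "centred_sum f a (u + of_nat n) + centred_sum f (n - a) u = centred_sum f n (u + of_nat a)"
  using progression_sum_add[of f "u - of_nat (n - a) + 1" "n - a" a] assms
  unfolding centred_sum_def by (simp add: of_nat_diff algebra_simps)

lemma centred_sum_antiperiodic:
  assumes "\<And>v. f (v + c) = - f (v + d)"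
  shows "centred_sum f k (u + c) = - centred_sum f k (u + d)"
proof -
  have "f (u + c - of_nat k + 1 + 2 * of_nat j) = - f (u + d - of_nat k + 1 + 2 * of_nat j)" for j
    using assms[of "u - of_nat k + 1 + 2 * of_nat j"] by (simp add: algebra_simps)
  then show ?thesis
    unfolding centred_sum_def progression_sum_def by (simp add: sum_negf)
qed

lemma A_relations_centred_sum:
  fixes T :: "nat \<Rightarrow> 'a::comm_ring_1 \<Rightarrow> 'g::ab_group_add"
  assumes zero: "\<And>u. T 0 u = 0"
    and rel: "\<And>a u. 1 \<le> a \<Longrightarrow> a \<le> m \<Longrightarrow> T a (u - 1) + T a (u + 1) = T (a - 1) u + T (a + 1) u"
    and "a \<le> m + 1"
  shows "T a u = centred_sum (T 1) a u"
  using \<open>a \<le> m + 1\<close>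
proof (induction a arbitrary: u rule: nat_less_induct)
  case (1 a)
  consider "a = 0" | "a = Suc 0" | b where "a = Suc (Suc b)"
    by (metis not0_implies_Suc)
  then show ?case
  proof cases
    case 3
    have "T a u = T (Suc b) (u - 1) + T (Suc b) (u + 1) - T b u"
      using rel[of "Suc b" u] 1(2) 3 by (simp add: algebra_simps)
    also have "\<dots> = centred_sum (T 1) a u"
      using 1 3 by (simp add: centred_sum_recurrence)
    finally show ?thesis .
  qed (simp_all add: zero)
qed

lemma A_system_reflection:
  fixes T :: "nat \<Rightarrow> 'a::comm_ring_1 \<Rightarrow> 'g::ab_group_add"
  assumes zero: "\<And>u. T 0 u = 0" and last_zero: "\<And>u. T (n + 1) u = 0"
    and rel: "\<And>a u. 1 \<le> a \<Longrightarrow> a \<le> n \<Longrightarrow> T a (u - 1) + T a (u + 1) = T (a - 1) u + T (a + 1) u"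
    and "a \<le> n + 1"
  shows "T a (u + of_nat (n + 1)) = - T (n + 1 - a) u"
proof -
  have centred: "T b v = centred_sum (T 1) b v" if "b \<le> n + 1" for b v
    using A_relations_centred_sum[OF zero rel that] .
  have "T a (u + of_nat (n + 1)) + T (n + 1 - a) u = T (n + 1) (u + of_nat a)"
    using centred_sum_split[OF \<open>a \<le> n + 1\<close>] \<open>a \<le> n + 1\<close>
      centred[of a] centred[of "n + 1 - a"] centred[of "n + 1"]
    by simp
  then show ?thesis
    using last_zero[of "u + of_nat a"] by (simp add: eq_neg_iff_add_eq_0)
qed

lemma periodic_of_antiperiodic_shift:
  fixes g :: "'a::ring_1 \<Rightarrow> 'g::ab_group_add"
  assumes anti: "\<And>v. g (v + h) = - g (v + c)" and periodic: "\<And>v. g (v + 2 * c) = g v"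
  shows "g (u + 2 * h) = g u"
proof -
  have "g (u + 2 * h) = - g ((u + h) + c)"
    using anti[of "u + h"] by (simp add: mult_2 algebra_simps)
  also have "\<dots> = g (u + 2 * c)"
    using anti[of "u + c"] by (simp add: mult_2 algebra_simps)
  finally show ?thesis
    using periodic by simp
qed

text \<open>Four steps along the relation of \<open>g\<close> cost two values of \<open>f\<close> (by the antiperiodicity of
  \<open>f\<close>), so \<open>2(k + 1)\<close> steps produce a centred sum of \<open>f\<close>, which the relation of \<open>g\<close> itself or
  the pair relation turns back into a value of \<open>g\<close>.\<close>

lemma spin_node_antiperiod:
  fixes g f :: "'a::comm_ring_1 \<Rightarrow> 'g::ab_group_add"
  assumes rel: "\<And>u. g (u - 1) + g (u + 1) = centred_sum f k u"
    and anti: "\<And>v. f (v + 2 * of_nat (k + 1)) = - f v"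
    and pair: "\<And>u. g u + g (u + W) = centred_sum f (k + 1) u"
  shows "g (u + 2 * of_nat (k + 1)) = - g (u + (if even k then 0 else W))"
proof -
  have four: "g (v + 4) = g v - f (v - of_nat k) - f (v + 2 - of_nat k)" for v
  proof -
    have "g (v + 2) = centred_sum f k (v + 1) - g v"
      "g (v + 4) = centred_sum f k (v + 3) - g (v + 2)"
      using rel[of "v + 1"] rel[of "v + 3"] by (simp_all add: eq_diff_eq algebra_simps)
    then have "g (v + 4) = centred_sum f k (v + 3) - centred_sum f k (v + 1) + g v"
      by simp
    also have "centred_sum f k (v + 3)
        = centred_sum f k (v + 1) + f (v + 2 + of_nat k) - f (v + 2 - of_nat k)"
      using centred_sum_translate[of f k "v + 2"] by (simp add: eq_diff_eq algebra_simps)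
    also have "f (v + 2 + of_nat k) = - f (v - of_nat k)"
      using anti[of "v - of_nat k"] by (simp add: algebra_simps)
    finally show ?thesis
      by (simp add: algebra_simps)
  qed
  have multiple_four:
    "g (v + 4 * of_nat l) = g v - progression_sum f (v - of_nat k) (2 * l)" for v l
  proof (induction l)
    case (Suc l)
    then show ?case
      using four[of "v + 4 * of_nat l"] by (simp add: progression_sum_Suc algebra_simps)
  qed simp
  show ?thesis
  proof (cases "even k")
    case True
    then obtain l where "k = 2 * l" by (rule evenE)
    then have shift: "g (u + 2 * of_nat (k + 1)) = g (u + 2) - centred_sum f k (u + 1)"
      using multiple_four[of "u + 2" l] by (simp add: centred_sum_def algebra_simps)
    have sum: "centred_sum f k (u + 1) = g u + g (u + 2)"
      using rel[of "u + 1"] by (simp add: add.assoc)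
    show ?thesis
      unfolding shift sum using True by simp
  next
    case False
    then obtain l where "k = 2 * l + 1" by (rule oddE)
    then have shift: "g (u + 2 * of_nat (k + 1)) = g u - centred_sum f (k + 1) u"
      using multiple_four[of u "l + 1"] by (simp add: centred_sum_def algebra_simps)
    show ?thesis
      unfolding shift pair[symmetric] using False by simp
  qed
qed

lemma T0_family_zero: "is_T0_family X hb T \<Longrightarrow> T 0 u = 0"
  by (simp add: is_T0_family_def)

lemma T0_family_relation:
  "is_T0_family X hb T \<Longrightarrow> a \<in> Isigma X \<Longrightarrow>
    T a (u - 1) + T a (u + 1) = Mrhs X (Omega X hb) T a u"
  by (simp add: is_T0_family_def)

lemma T0_family_periodic:
  "is_T0_family X hb T \<Longrightarrow> a \<in> Isigma X \<Longrightarrow>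
    T a (u + 2 * pi * \<i> / (of_nat (kappa_a X a) * hb)) = T a u"
  by (simp add: is_T0_family_def)

lemma T0_family_Omega_periodic:
  assumes "is_T0_family X hb T" "a \<in> Isigma X" "tkappa X = 2" "kappa_a X a = 2"
  shows "T a (u + Omega X hb) = T a u"
  using T0_family_periodic[OF assms(1,2)] assms(3,4) by (simp add: Omega_def)

lemma T0_family_double_Omega_periodic:
  assumes fam: "is_T0_family X hb T" and a: "a \<in> Isigma X" and "tkappa X = 2"
  shows "T a (u + 2 * Omega X hb) = T a u"
proof -
  have "kappa_a X a = 1 \<or> kappa_a X a = 2"
    using \<open>tkappa X = 2\<close> by (cases X) auto
  then show ?thesis
  proof
    assume "kappa_a X a = 1"
    moreover have "2 * pi * \<i> / hb = 2 * Omega X hb"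
      using \<open>tkappa X = 2\<close> by (cases "hb = 0"; simp add: Omega_def field_simps)
    ultimately show ?thesis
      using T0_family_periodic[OF fam a, of u] by (simp only: of_nat_1 mult_1_left)
  next
    assume "kappa_a X a = 2"
    then have "T a (v + Omega X hb) = T a v" for v
      using T0_family_Omega_periodic[OF fam a \<open>tkappa X = 2\<close>] by simp
    then show ?thesis
      by (metis add.assoc mult_2)
  qed
qed

text \<open>The twisted type A systems are type A systems folded by the diagram automorphism
  \<open>b \<mapsto> m - b\<close>, which also shifts the spectral parameter by \<open>W\<close>.\<close>

definition mirror_extension ::
    "(nat \<Rightarrow> 'a::plus \<Rightarrow> 'g) \<Rightarrow> nat \<Rightarrow> nat \<Rightarrow> 'a \<Rightarrow> nat \<Rightarrow> 'a \<Rightarrow> 'g" where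
  "mirror_extension T r m W b u = (if b \<le> r then T b u else T (m - b) (u + W))"

context
  fixes r :: nat and hb :: complex and T :: "nat \<Rightarrow> complex \<Rightarrow> 'g::ab_group_add"
  assumes A2odd_rank: "2 \<le> r" and A2odd_family: "is_T0_family (A2odd r) hb T"
begin

lemma A2odd_interior_relation:
  "1 \<le> a \<Longrightarrow> a < r \<Longrightarrow> T a (u - 1) + T a (u + 1) = T (a - 1) u + T (a + 1) u"
  using T0_family_relation[OF A2odd_family, of a u] by auto

lemma A2odd_last_relation:
  "T r (u - 1) + T r (u + 1) = T (r - 1) u + T (r - 1) (u + Omega (A2odd r) hb)"
  using T0_family_relation[OF A2odd_family, of r u] A2odd_rank by auto

lemma A2odd_last_periodic: "T r (u + Omega (A2odd r) hb) = T r u"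
  using T0_family_Omega_periodic[OF A2odd_family] A2odd_rank by simp

lemma A2odd_mirror_extension_relation:
  assumes "1 \<le> b" "b < 2 * r"
  shows "mirror_extension T r (2 * r) (Omega (A2odd r) hb) b (u - 1)
           + mirror_extension T r (2 * r) (Omega (A2odd r) hb) b (u + 1)
         = mirror_extension T r (2 * r) (Omega (A2odd r) hb) (b - 1) u
           + mirror_extension T r (2 * r) (Omega (A2odd r) hb) (b + 1) u"
proof -
  let ?W = "Omega (A2odd r) hb"
  consider "b < r" | "b = r" | "r < b" by linarith
  then show ?thesis
  proof cases
    case 1
    then show ?thesis
      using A2odd_interior_relation[OF \<open>1 \<le> b\<close> 1, of u] by (auto simp add: mirror_extension_def)
  next
    case 2
    then show ?thesis
      using A2odd_last_relation[of u] A2odd_last_periodic[of u]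
      by (simp add: mirror_extension_def mult_2)
  next
    case 3
    define c where "c = 2 * r - b"
    have c: "1 \<le> c" "c < r" "2 * r - (b + 1) = c - 1"
      using 3 assms c_def by auto
    have "mirror_extension T r (2 * r) ?W (b - 1) u = T (c + 1) (u + ?W)"
    proof (cases "b = r + 1")
      case True
      then show ?thesis
        using c_def A2odd_last_periodic[of u] A2odd_rank by (simp add: mirror_extension_def)
    next
      case False
      then show ?thesis
        using 3 assms c_def by (auto simp add: mirror_extension_def Suc_diff_le)
    qed
    then show ?thesis
      using A2odd_interior_relation[OF c(1,2), of "u + ?W"] 3 c
      by (simp add: mirror_extension_def c_def algebra_simps)
  qed
qed

lemma A2odd_half_period:
  assumes "a \<in> {1..r}"
  shows "T a (u + of_nat (2 * r)) = - T a (u + Omega (A2odd r) hb)"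
proof -
  let ?T' = "mirror_extension T r (2 * r) (Omega (A2odd r) hb)"
  have "?T' a (u + of_nat (2 * r - 1 + 1)) = - ?T' (2 * r - 1 + 1 - a) u"
  proof (rule A_system_reflection)
    show "?T' 0 v = 0" "?T' (2 * r - 1 + 1) v = 0" for v
      using A2odd_rank T0_family_zero[OF A2odd_family] by (simp_all add: mirror_extension_def)
    show "?T' b (v - 1) + ?T' b (v + 1) = ?T' (b - 1) v + ?T' (b + 1) v"
      if "1 \<le> b" "b \<le> 2 * r - 1" for b v
      using A2odd_mirror_extension_relation[of b v] that by simp
  qed (use assms in simp)
  moreover have "?T' (2 * r - a) u = T a (u + Omega (A2odd r) hb)"
    using assms A2odd_last_periodic[of u] by (cases "a = r") (auto simp add: mirror_extension_def)
  ultimately show ?thesis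
    using assms A2odd_rank by (simp add: mirror_extension_def)
qed

end

context
  fixes r :: nat and hb :: complex and T :: "nat \<Rightarrow> complex \<Rightarrow> 'g::ab_group_add"
  assumes A2even_rank: "1 \<le> r" and A2even_family: "is_T0_family (A2even r) hb T"
begin

lemma A2even_interior_relation:
  "1 \<le> a \<Longrightarrow> a < r \<Longrightarrow> T a (u - 1) + T a (u + 1) = T (a - 1) u + T (a + 1) u"
  using T0_family_relation[OF A2even_family, of a u] by auto

lemma A2even_last_relation:
  "T r (u - 1) + T r (u + 1) = T (r - 1) u + T r (u + Omega (A2even r) hb)"
  using T0_family_relation[OF A2even_family, of r u] A2even_rank by auto

lemma A2even_last_periodic: "T r (u + 2 * Omega (A2even r) hb) = T r u"
  using T0_family_double_Omega_periodic[OF A2even_family] A2even_rank by simp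

lemma A2even_mirror_extension_relation:
  assumes "1 \<le> b" "b \<le> 2 * r"
  shows "mirror_extension T r (2 * r + 1) (Omega (A2even r) hb) b (u - 1)
           + mirror_extension T r (2 * r + 1) (Omega (A2even r) hb) b (u + 1)
         = mirror_extension T r (2 * r + 1) (Omega (A2even r) hb) (b - 1) u
           + mirror_extension T r (2 * r + 1) (Omega (A2even r) hb) (b + 1) u"
proof -
  let ?W = "Omega (A2even r) hb"
  consider "b < r" | "b = r" | "r < b" by linarith
  then show ?thesis
  proof cases
    case 1
    then show ?thesis
      using A2even_interior_relation[OF \<open>1 \<le> b\<close> 1, of u] by (auto simp add: mirror_extension_def)
  next
    case 2
    then show ?thesis
      using A2even_last_relation[of u] by (simp add: mirror_extension_def)
  next
    case 3
    define c where "c = 2 * r + 1 - b"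
    have c: "1 \<le> c" "c \<le> r" "2 * r + 1 - (b + 1) = c - 1"
      using 3 assms c_def by auto
    have outer: "mirror_extension T r (2 * r + 1) ?W b (u - 1)
        + mirror_extension T r (2 * r + 1) ?W b (u + 1)
      = T c (u + ?W - 1) + T c (u + ?W + 1)"
      using 3 by (simp add: mirror_extension_def c_def algebra_simps)
    show ?thesis
    proof (cases "c = r")
      case True
      then have "b = r + 1"
        using 3 assms c_def by auto
      moreover have "T r (u + ?W + ?W) = T r u"
        by (metis A2even_last_periodic add.assoc mult_2)
      ultimately show ?thesis
        using outer A2even_last_relation[of "u + ?W"] 3 c True
        by (simp add: mirror_extension_def c_def)
    next
      case False
      then have "mirror_extension T r (2 * r + 1) ?W (b - 1) u = T (c + 1) (u + ?W)"
        using 3 assms c_def by (auto simp add: mirror_extension_def Suc_diff_le)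
      then show ?thesis
        using outer A2even_interior_relation[of c "u + ?W"] 3 c False
        by (simp add: mirror_extension_def c_def algebra_simps)
    qed
  qed
qed

lemma A2even_half_period:
  assumes "a \<in> {1..r}"
  shows "T a (u + of_nat (2 * r + 1)) = - T a (u + Omega (A2even r) hb)"
proof -
  let ?T' = "mirror_extension T r (2 * r + 1) (Omega (A2even r) hb)"
  have "?T' a (u + of_nat (2 * r + 1)) = - ?T' (2 * r + 1 - a) u"
  proof (rule A_system_reflection)
    show "?T' 0 v = 0" "?T' (2 * r + 1) v = 0" for v
      using T0_family_zero[OF A2even_family] by (simp_all add: mirror_extension_def)
    show "?T' b (v - 1) + ?T' b (v + 1) = ?T' (b - 1) v + ?T' (b + 1) v"
      if "1 \<le> b" "b \<le> 2 * r" for b v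
      using A2even_mirror_extension_relation[OF that] .
  qed (use assms in simp)
  then show ?thesis
    using assms by (auto simp add: mirror_extension_def)
qed

end

context
  fixes r :: nat and hb :: complex and T :: "nat \<Rightarrow> complex \<Rightarrow> 'g::ab_group_add"
  assumes D2_rank: "3 \<le> r" and D2_family: "is_T0_family (D2 r) hb T"
begin

lemma D2_interior_relation:
  "1 \<le> a \<Longrightarrow> a \<le> r - 2 \<Longrightarrow> T a (u - 1) + T a (u + 1) = T (a - 1) u + T (a + 1) u"
  using T0_family_relation[OF D2_family, of a u] by auto

lemma D2_fork_relation:
  "T (r - 1) (u - 1) + T (r - 1) (u + 1) = T (r - 2) u + T r u + T r (u + Omega (D2 r) hb)"
  using T0_family_relation[OF D2_family, of "r - 1" u] D2_rank by auto

lemma D2_spin_relation: "T r (u - 1) + T r (u + 1) = T (r - 1) u"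
  using T0_family_relation[OF D2_family, of r u] D2_rank by auto

lemma D2_Omega_periodic: "1 \<le> a \<Longrightarrow> a < r \<Longrightarrow> T a (u + Omega (D2 r) hb) = T a u"
  using T0_family_Omega_periodic[OF D2_family] by simp

lemma D2_centred_sum: "a \<le> r - 1 \<Longrightarrow> T a u = centred_sum (T 1) a u"
proof (rule A_relations_centred_sum[where m = "r - 2"])
  show "T 0 v = 0" for v
    using T0_family_zero[OF D2_family] .
qed (use D2_interior_relation D2_rank in auto)

lemma D2_spin_pair: "T r u + T r (u + Omega (D2 r) hb) = centred_sum (T 1) r u"
proof -
  define k where "k = r - 2"
  then have r: "r = Suc (Suc k)"
    using D2_rank by simp
  have "centred_sum (T 1) r u
      = T (r - 1) (u - 1) + T (r - 1) (u + 1) - T (r - 2) u"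
    using centred_sum_recurrence[of "T 1" k u] D2_centred_sum[of "r - 1"]
      D2_centred_sum[of "r - 2"] r
    by simp
  then show ?thesis
    using D2_fork_relation[of u] by simp
qed

text \<open>By the spin pair relation and the spin relation, the centred sums of \<open>T 1\<close> of orders
  \<open>r + 1\<close> and \<open>r - 1\<close> agree, so the two outer terms of the former cancel.\<close>

lemma D2_first_node_antiperiodic: "T 1 (v + 2 * of_nat r) = - T 1 v"
proof -
  let ?W = "Omega (D2 r) hb" and ?C = "centred_sum (T 1)"
  define k where "k = r - 1"
  then have r: "r = Suc k"
    using D2_rank by simp
  have "T 1 (u - of_nat r) + T 1 (u + of_nat r) = 0" for u
  proof -
    have "?C (r + 1) u = ?C r (u - 1) + ?C r (u + 1) - ?C k u"
      using centred_sum_recurrence[of "T 1" k u] r by simp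
    also have "?C r (u - 1) + ?C r (u + 1)
        = (T r (u - 1) + T r (u + 1)) + (T r (u - 1 + ?W) + T r (u + 1 + ?W))"
      using D2_spin_pair[of "u - 1"] D2_spin_pair[of "u + 1"] by (simp add: algebra_simps)
    also have "\<dots> = ?C k u + ?C k u"
      using D2_spin_relation[of u] D2_spin_relation[of "u + ?W"] D2_Omega_periodic[of k u]
        D2_centred_sum[of k u] D2_rank r by (simp add: algebra_simps)
    finally have "?C (r + 1) u = ?C k u"
      by simp
    moreover have "?C (r + 1) u = T 1 (u - of_nat r) + ?C k u + T 1 (u + of_nat r)"
      using centred_sum_Suc_Suc[of "T 1" k u] r by (simp add: algebra_simps)
    ultimately show ?thesis
      by (simp add: algebra_simps)
  qed
  from this[of "v + of_nat r"] show ?thesis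
    by (simp add: eq_neg_iff_add_eq_0 algebra_simps)
qed

lemma D2_spin_half_period:
  "T r (u + 2 * of_nat r) = - T r (u + (if even (r + 1) then 0 else Omega (D2 r) hb))"
proof -
  have "T r (u + 2 * of_nat (r - 1 + 1))
      = - T r (u + (if even (r - 1) then 0 else Omega (D2 r) hb))"
  proof (rule spin_node_antiperiod)
    show "T r (v - 1) + T r (v + 1) = centred_sum (T 1) (r - 1) v" for v
      using D2_spin_relation[of v] D2_centred_sum[of "r - 1" v] by simp
    show "T 1 (v + 2 * of_nat (r - 1 + 1)) = - T 1 v" for v
      using D2_first_node_antiperiodic[of v] D2_rank by simp
    show "T r v + T r (v + Omega (D2 r) hb) = centred_sum (T 1) (r - 1 + 1) v" for v
      using D2_spin_pair[of v] D2_rank by simp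
  qed
  then show ?thesis
    using D2_rank by simp
qed

lemma D2_half_period:
  assumes "a \<in> {1..r}"
  shows "T a (u + of_nat (2 * r)) = - T a (u + (if even (r + 1) then 0 else Omega (D2 r) hb))"
proof (cases "a = r")
  case True
  then show ?thesis
    using D2_spin_half_period by simp
next
  case False
  then have "a \<le> r - 1" "1 \<le> a" "a < r"
    using assms by auto
  moreover have "centred_sum (T 1) a (u + 2 * of_nat r) = - centred_sum (T 1) a (u + 0)"
    by (rule centred_sum_antiperiodic) (use D2_first_node_antiperiodic in simp)
  ultimately show ?thesis
    using D2_centred_sum[of a] D2_Omega_periodic[of a u] by simp
qed

end

context
  fixes hb :: complex and T :: "nat \<Rightarrow> complex \<Rightarrow> 'g::ab_group_add"
  assumes E26_family: "is_T0_family E26 hb T"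
begin

lemma E26_A_relation:
  "1 \<le> a \<Longrightarrow> a \<le> 2 \<Longrightarrow> T a (u - 1) + T a (u + 1) = T (a - 1) u + T (a + 1) u"
  using T0_family_relation[OF E26_family, of a u] T0_family_zero[OF E26_family, of u]
  by (auto simp add: le_Suc_eq numeral_2_eq_2 numeral_3_eq_3)

lemma E26_third_relation: "T 3 (u - 1) + T 3 (u + 1) = T 2 u + T 2 (u + Omega E26 hb) + T 4 u"
  using T0_family_relation[OF E26_family, of 3 u] by simp

lemma E26_fourth_relation: "T 4 (u - 1) + T 4 (u + 1) = T 3 u"
  using T0_family_relation[OF E26_family, of 4 u] by simp

lemma E26_centred_sum: "a \<le> 3 \<Longrightarrow> T a u = centred_sum (T 1) a u"
proof (rule A_relations_centred_sum[where m = 2])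
  show "T 0 v = 0" for v
    using T0_family_zero[OF E26_family] .
qed (use E26_A_relation in auto)

lemma E26_fourth_node: "T 4 u = centred_sum (T 1) 4 u - centred_sum (T 1) 2 (u + Omega E26 hb)"
proof -
  have "centred_sum (T 1) 4 u
      = centred_sum (T 1) 3 (u - 1) + centred_sum (T 1) 3 (u + 1) - centred_sum (T 1) 2 u"
    using centred_sum_recurrence[of "T 1" 2 u] by (simp add: numeral_eq_Suc)
  also have "\<dots> = T 2 (u + Omega E26 hb) + T 4 u"
    using E26_third_relation[of u] E26_centred_sum[of 3] E26_centred_sum[of 2]
    by (simp add: algebra_simps)
  finally show ?thesis
    using E26_centred_sum[of 2 "u + Omega E26 hb"] by (simp add: algebra_simps)
qed

lemma E26_first_node_relation: "T 1 (v - 4) + T 1 (v + 4) = T 1 (v + Omega E26 hb)"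
proof -
  let ?W = "Omega E26 hb" and ?C = "centred_sum (T 1)"
  have "?C 5 v = ?C 4 (v - 1) + ?C 4 (v + 1) - ?C 3 v"
    using centred_sum_recurrence[of "T 1" 3 v] by (simp add: numeral_eq_Suc)
  also have "\<dots>
      = (T 4 (v - 1) + T 4 (v + 1)) + (?C 2 (v + ?W - 1) + ?C 2 (v + ?W + 1)) - ?C 3 v"
    unfolding E26_fourth_node by (simp add: algebra_simps)
  also have "\<dots> = ?C 2 (v + ?W - 1) + ?C 2 (v + ?W + 1)"
    using E26_fourth_relation[of v] E26_centred_sum[of 3 v] by simp
  also have "\<dots> = ?C 3 (v + ?W) + T 1 (v + ?W)"
    using centred_sum_recurrence[of "T 1" 1 "v + ?W"] by (simp add: numeral_eq_Suc)
  also have "\<dots> = ?C 3 v + T 1 (v + ?W)"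
    using T0_family_Omega_periodic[OF E26_family, of 3 v] E26_centred_sum[of 3] by simp
  finally have "?C 5 v = ?C 3 v + T 1 (v + ?W)" .
  moreover have "?C 5 v = T 1 (v - 4) + ?C 3 v + T 1 (v + 4)"
    using centred_sum_Suc_Suc[of "T 1" 3 v] by (simp add: numeral_eq_Suc algebra_simps)
  ultimately show ?thesis
    by (simp add: algebra_simps)
qed

lemma E26_first_node_half_period: "T 1 (v + 12) = - T 1 (v + Omega E26 hb)"
proof -
  let ?W = "Omega E26 hb"
  have "T 1 (v + 12) = T 1 (v + 8 + ?W) - T 1 (v + 4)"
    using E26_first_node_relation[of "v + 8"] by (simp add: eq_diff_eq algebra_simps)
  also have "T 1 (v + 8 + ?W) = T 1 (v + 4 + 2 * ?W) - T 1 (v + ?W)"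
    using E26_first_node_relation[of "v + 4 + ?W"] by (simp add: eq_diff_eq algebra_simps)
  also have "T 1 (v + 4 + 2 * ?W) = T 1 (v + 4)"
    using T0_family_double_Omega_periodic[OF E26_family] by simp
  finally show ?thesis
    by simp
qed

lemma E26_half_period:
  assumes "a \<in> {1, 2, 3, 4}"
  shows "T a (u + 12) = - T a (u + Omega E26 hb)"
proof -
  let ?W = "Omega E26 hb"
  have antiperiodic: "centred_sum (T 1) k (v + 12) = - centred_sum (T 1) k (v + ?W)" for k v
    by (rule centred_sum_antiperiodic) (use E26_first_node_half_period in simp)
  show ?thesis
  proof (cases "a = 4")
    case True
    have "T 4 (u + 12) = centred_sum (T 1) 4 (u + 12) - centred_sum (T 1) 2 ((u + ?W) + 12)"
      by (simp add: E26_fourth_node algebra_simps)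
    also have "\<dots> = - centred_sum (T 1) 4 (u + ?W) + centred_sum (T 1) 2 ((u + ?W) + ?W)"
      using antiperiodic[of 4 u] antiperiodic[of 2 "u + ?W"] by simp
    also have "\<dots> = - T 4 (u + ?W)"
      by (simp add: E26_fourth_node algebra_simps)
    finally show ?thesis
      using True by simp
  next
    case False
    then show ?thesis
      using assms E26_centred_sum[of a] antiperiodic[of a u] by auto
  qed
qed

end

context
  fixes hb :: complex and T :: "nat \<Rightarrow> complex \<Rightarrow> 'g::ab_group_add"
  assumes D34_family: "is_T0_family D34 hb T"
begin

lemma D34_second_node: "T 2 u = centred_sum (T 1) 2 u"
proof (rule A_relations_centred_sum[where m = 1])
  show "T 0 v = 0" for v
    using T0_family_zero[OF D34_family] .
  show "T a (v - 1) + T a (v + 1) = T (a - 1) v + T (a + 1) v" if "1 \<le> a" "a \<le> 1" for a v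
    using that T0_family_relation[OF D34_family, of 1 v] T0_family_zero[OF D34_family, of v]
    by (simp add: numeral_2_eq_2)
qed simp

lemma D34_second_periodic: "centred_sum (T 1) 2 (u + Omega D34 hb) = centred_sum (T 1) 2 u"
  using T0_family_periodic[OF D34_family, of 2 u] D34_second_node by (simp add: Omega_def)

lemma D34_first_node_half_period: "T 1 (v + 6) = - T 1 v"
proof -
  let ?W = "Omega D34 hb" and ?C = "centred_sum (T 1)"
  have pair: "?C 2 u = T 1 (u - 1) + T 1 (u + 1)" for u
    using centred_sum_Suc_Suc[of "T 1" 0 u] by (simp add: numeral_2_eq_2)
  have third: "?C 3 u = T 1 (u - ?W) + T 1 (u + ?W)" for u
    using centred_sum_recurrence[of "T 1" 1 u] T0_family_relation[OF D34_family, of 2 u]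
      D34_second_node[of "u - 1"] D34_second_node[of "u + 1"] by (simp add: numeral_eq_Suc)
  have "?C 4 u = ?C 3 (u - 1) + ?C 3 (u + 1) - ?C 2 u" for u
    using centred_sum_recurrence[of "T 1" 2 u] by (simp add: numeral_eq_Suc)
  also have "\<dots> u = ?C 2 (u - ?W) + ?C 2 (u + ?W) - ?C 2 u" for u
    unfolding third pair by (simp add: algebra_simps)
  also have "\<dots> u = ?C 2 u" for u
    using D34_second_periodic[of u] D34_second_periodic[of "u - ?W"] by simp
  finally have "?C 4 u = ?C 2 u" for u .
  moreover have "?C 4 u = T 1 (u - 3) + ?C 2 u + T 1 (u + 3)" for u
    using centred_sum_Suc_Suc[of "T 1" 2 u] by (simp add: numeral_eq_Suc algebra_simps)
  ultimately have "T 1 (u - 3) + T 1 (u + 3) = 0" for u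
    by (simp add: algebra_simps)
  from this[of "v + 3"] show ?thesis
    by (simp add: eq_neg_iff_add_eq_0 algebra_simps)
qed

lemma D34_half_period:
  assumes "a \<in> {1, 2}"
  shows "T a (u + 6) = - T a u"
proof -
  have "centred_sum (T 1) 2 (u + 6) = - centred_sum (T 1) 2 (u + 0)"
    by (rule centred_sum_antiperiodic) (use D34_first_node_half_period in simp)
  then show ?thesis
    using assms D34_first_node_half_period D34_second_node by auto
qed

end

definition half_period_shift :: "twisted_type \<Rightarrow> complex \<Rightarrow> complex" where
  "half_period_shift X hb = (if (\<exists>r. X = D2 r \<and> even (r + 1)) \<or> X = D34 then 0 else Omega X hb)"

lemma T0_family_half_period:
  assumes wf: "tt_wf X" and fam: "is_T0_family X hb T" and a: "a \<in> Isigma X"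
  shows "T a (u + of_nat (hvee X)) = - T a (u + half_period_shift X hb)"
proof (cases X)
  case (A2odd r)
  then show ?thesis
    using A2odd_half_period[of r hb T a u] wf fam a by (simp add: half_period_shift_def)
next
  case (A2even r)
  then show ?thesis
    using A2even_half_period[of r hb T a u] wf fam a by (simp add: half_period_shift_def)
next
  case (D2 r)
  then show ?thesis
    using D2_half_period[of r hb T a u] wf fam a by (simp add: half_period_shift_def)
next
  case E26
  then show ?thesis
    using E26_half_period[of hb T a u] fam a by (simp add: half_period_shift_def)
next
  case D34
  then show ?thesis
    using D34_half_period[of hb T a u] fam a by (simp add: half_period_shift_def)
qed

lemma T0_family_half_period_shift_periodic:
  assumes fam: "is_T0_family X hb T" and a: "a \<in> Isigma X"
  shows "T a (u + 2 * half_period_shift X hb) = T a u"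
proof (cases "X = D34")
  case False
  then have "tkappa X = 2"
    by (cases X) simp_all
  then show ?thesis
    using T0_family_double_Omega_periodic[OF fam a] by (simp add: half_period_shift_def)
qed (simp add: half_period_shift_def)

theorem theorem9p27:
  fixes X :: twisted_type and hb :: complex
    and T :: "nat \<Rightarrow> complex \<Rightarrow> 'g::ab_group_add"
  assumes "tt_wf X"
    and "\<forall>q::rat. hb \<noteq> 2 * pi * \<i> * of_real (of_rat q)"
    and "is_T0_family X hb T"
  shows "\<forall>a\<in>Isigma X. \<forall>u.
           ((if (\<exists>r. X = D2 r \<and> even (r + 1)) \<or> X = D34
             then T a (u + of_nat (hvee X)) = - T a u
             else T a (u + of_nat (hvee X)) = - T a (u + Omega X hb))
           \<and> T a (u + 2 * of_nat (hvee X)) = T a u)"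
proof (intro ballI allI conjI)
  fix a u
  assume a: "a \<in> Isigma X"
  have half: "T a (v + of_nat (hvee X)) = - T a (v + half_period_shift X hb)" for v
    using T0_family_half_period[OF assms(1,3) a] .
  show "if (\<exists>r. X = D2 r \<and> even (r + 1)) \<or> X = D34
      then T a (u + of_nat (hvee X)) = - T a u
      else T a (u + of_nat (hvee X)) = - T a (u + Omega X hb)"
    using half[of u] by (auto simp add: half_period_shift_def)
  show "T a (u + 2 * of_nat (hvee X)) = T a u"
    by (rule periodic_of_antiperiodic_shift[OF half])
      (rule T0_family_half_period_shift_periodic[OF assms(3) a])
qed

end
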